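(* Let $k\ge2$, $n\ge1$ be integers, let $\Xi:=\{\mathbf{z}\in\mathbb{R}^n_+:\mathbf{e}^T\mathbf{z}\ge1\}$ and define $\varphi(\mathbf{z}):=(\mathbf{e}^T\mathbf{z})^{-\frac{k-2}{k-1}}\mathbf{z}$ for $\mathbf{z}\in\Xi$. Then for all $\mathbf{a},\mathbf{b}\in\Xi$, $$\|\varphi(\mathbf{a})-\varphi(\mathbf{b})\|_1\le\frac{2k-3}{k-1}\|\mathbf{a}-\mathbf{b}\|_1.$$
   Context: $\mathbf{e}$ is the all-ones vector in $\mathbb{R}^n$. *)

theory Defs
  imports "HOL-Analysis.Analysis"
begin

definition ones :: "real ^ 'n" where
  "ones = (\<chi> i. 1)"

definition norm1 :: "real ^ 'n \<Rightarrow> real" where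
  "norm1 x = (\<Sum>i\<in>UNIV. \<bar>x $ i\<bar>)"

definition Xi :: "(real ^ 'n) set" where
  "Xi = {z. (\<forall>i. 0 \<le> z $ i) \<and> ones \<bullet> z \<ge> 1}"

definition phi :: "nat \<Rightarrow> real ^ 'n \<Rightarrow> real ^ 'n" where
  "phi k z = ((ones \<bullet> z) powr (- ((real k - 2) / (real k - 1)))) *\<^sub>R z"

end

theory Submission imports Defs begin

text \<open>Write \<open>p = (k - 2)/(k - 1)\<close>, so that \<open>\<phi>(z) = (e\<^sup>T z)\<^sup>-\<^sup>p z\<close> and the constant is \<open>1 + p\<close>.
  If \<open>s = e\<^sup>T a \<ge> t = e\<^sup>T b \<ge> 1\<close>, then
  \<open>\<phi>(a) - \<phi>(b) = s\<^sup>-\<^sup>p (a - b) + (s\<^sup>-\<^sup>p - t\<^sup>-\<^sup>p) b\<close>. The first term has norm at most \<open>\<parallel>a - b\<parallel>\<^sub>1\<close>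
  since \<open>s \<ge> 1\<close>; as \<open>\<parallel>b\<parallel>\<^sub>1 = t\<close>, the second has norm \<open>t (t\<^sup>-\<^sup>p - s\<^sup>-\<^sup>p)\<close>, which by convexity of
  \<open>x\<^sup>-\<^sup>p\<close> is at most \<open>p t\<^sup>-\<^sup>p (s - t) \<le> p (s - t) \<le> p \<parallel>a - b\<parallel>\<^sub>1\<close>.\<close>

lemma one_minus_le_powr_neg:
  fixes x p :: real
  assumes "0 < x" "0 \<le> p"
  shows "1 - p * (x - 1) \<le> x powr (- p)"
proof -
  have "p * ln x \<le> p * (x - 1)"
    using assms by (intro mult_left_mono ln_le_minus_one) auto
  moreover have "1 + (- p * ln x) \<le> exp (- p * ln x)"
    by (rule exp_ge_add_one_self)
  ultimately show ?thesis
    using assms by (simp add: powr_def)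
qed

lemma powr_neg_diff_le:
  fixes s t p :: real
  assumes "0 < t" "0 < s" "0 \<le> p"
  shows "t * (t powr (- p) - s powr (- p)) \<le> p * t powr (- p) * (s - t)"
proof -
  have "s powr (- p) = t powr (- p) * (s / t) powr (- p)"
    using assms by (simp add: powr_divide)
  also have "\<dots> \<ge> t powr (- p) * (1 - p * (s / t - 1))"
    using assms by (intro mult_left_mono one_minus_le_powr_neg) auto
  finally have "t powr (- p) * (1 - p * (s / t - 1)) \<le> s powr (- p)" .
  then have "t * (t powr (- p) * (1 - p * (s / t - 1))) \<le> t * s powr (- p)"
    using assms(1) by (intro mult_left_mono) auto
  moreover have "t * (t powr (- p) * (1 - p * (s / t - 1)))
                   = t * t powr (- p) - p * t powr (- p) * (s - t)"
    using assms(1) by (simp add: field_simps)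
  ultimately show ?thesis
    by (simp add: algebra_simps)
qed

lemma norm1_triangle: "norm1 (x + y) \<le> norm1 x + norm1 y"
  unfolding norm1_def by (simp add: sum.distrib[symmetric] sum_mono abs_triangle_ineq)

lemma norm1_scaleR: "norm1 (c *\<^sub>R x) = \<bar>c\<bar> * norm1 x"
  unfolding norm1_def by (simp add: abs_mult sum_distrib_left)

lemma norm1_minus_commute: "norm1 (x - y) = norm1 (y - x)"
  unfolding norm1_def by (simp add: abs_minus_commute)

lemma norm1_nonneg: "0 \<le> norm1 x"
  unfolding norm1_def by (simp add: sum_nonneg)

lemma inner_ones: "ones \<bullet> z = (\<Sum>i\<in>UNIV. z $ i)"
  unfolding ones_def inner_vec_def by simp

lemma norm1_eq_inner_ones: "(\<And>i. 0 \<le> z $ i) \<Longrightarrow> norm1 z = ones \<bullet> z"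
  unfolding norm1_def inner_ones by simp

lemma inner_ones_diff_le_norm1: "ones \<bullet> a - ones \<bullet> b \<le> norm1 (a - b)"
proof -
  have "ones \<bullet> a - ones \<bullet> b = (\<Sum>i\<in>UNIV. (a - b) $ i)"
    by (simp add: inner_ones sum_subtractf)
  also have "\<dots> \<le> norm1 (a - b)"
    unfolding norm1_def by (intro sum_mono) simp
  finally show ?thesis .
qed

lemma norm1_powr_scale_diff_le_ordered:
  fixes a b :: "real ^ 'n"
  assumes "0 \<le> p" and b_nonneg: "\<And>i. 0 \<le> b $ i"
    and "1 \<le> ones \<bullet> b" "ones \<bullet> b \<le> ones \<bullet> a"
  shows "norm1 ((ones \<bullet> a) powr (- p) *\<^sub>R a - (ones \<bullet> b) powr (- p) *\<^sub>R b)
           \<le> (1 + p) * norm1 (a - b)"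
proof -
  define s t where "s = ones \<bullet> a" and "t = ones \<bullet> b"
  have st: "1 \<le> t" "t \<le> s"
    using assms by (simp_all add: s_def t_def)
  have powr_le_one: "s powr (- p) \<le> 1" "t powr (- p) \<le> 1"
    using st assms(1) powr_mono[of "- p" 0 s] powr_mono[of "- p" 0 t] by simp_all
  have "s powr (- p) *\<^sub>R a - t powr (- p) *\<^sub>R b
          = s powr (- p) *\<^sub>R (a - b) + (s powr (- p) - t powr (- p)) *\<^sub>R b"
    by (simp add: algebra_simps)
  then have "norm1 (s powr (- p) *\<^sub>R a - t powr (- p) *\<^sub>R b)
          \<le> s powr (- p) * norm1 (a - b) + \<bar>s powr (- p) - t powr (- p)\<bar> * t"
    using norm1_triangle norm1_scaleR norm1_eq_inner_ones[OF b_nonneg]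
    by (metis abs_of_nonneg powr_ge_zero t_def)
  also have "s powr (- p) * norm1 (a - b) \<le> norm1 (a - b)"
    using powr_le_one(1) norm1_nonneg[of "a - b"] by (simp add: mult_left_le_one_le)
  also have "\<bar>s powr (- p) - t powr (- p)\<bar> * t = t * (t powr (- p) - s powr (- p))"
    using st assms(1) by (simp add: powr_mono2')
  also have "\<dots> \<le> p * t powr (- p) * (s - t)"
    using st assms(1) by (intro powr_neg_diff_le) auto
  also have "\<dots> = t powr (- p) * (p * (s - t))"
    by (simp add: ac_simps)
  also have "\<dots> \<le> p * (s - t)"
    using st assms(1) powr_le_one(2) by (intro mult_left_le_one_le) auto
  also have "\<dots> \<le> p * norm1 (a - b)"
    using inner_ones_diff_le_norm1[of a b] assms(1) by (simp add: s_def t_def mult_left_mono)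
  finally show ?thesis
    by (simp add: s_def t_def algebra_simps)
qed

lemma norm1_powr_scale_diff_le:
  fixes a b :: "real ^ 'n"
  assumes "0 \<le> p" "a \<in> Xi" "b \<in> Xi"
  shows "norm1 ((ones \<bullet> a) powr (- p) *\<^sub>R a - (ones \<bullet> b) powr (- p) *\<^sub>R b)
           \<le> (1 + p) * norm1 (a - b)"
proof (cases "ones \<bullet> b \<le> ones \<bullet> a")
  case True
  then show ?thesis
    using assms norm1_powr_scale_diff_le_ordered[of p b a] by (simp add: Xi_def)
next
  case False
  then show ?thesis
    using assms norm1_powr_scale_diff_le_ordered[of p a b]
    by (simp add: Xi_def norm1_minus_commute)
qed

theorem lemma3p9:
  fixes k :: nat and a b :: "real ^ 'n"
  assumes "k \<ge> 2" and "a \<in> Xi" and "b \<in> Xi"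
  shows "norm1 (phi k a - phi k b) \<le> (2 * real k - 3) / (real k - 1) * norm1 (a - b)"
proof -
  define p where "p = (real k - 2) / (real k - 1)"
  have "0 \<le> p"
    using assms(1) by (simp add: p_def)
  moreover have "(2 * real k - 3) / (real k - 1) = 1 + p"
    using assms(1) by (simp add: p_def field_simps)
  ultimately show ?thesis
    using norm1_powr_scale_diff_le[OF _ assms(2,3)] by (simp add: phi_def p_def)
qed

end
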